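(* Let $t_1,\dots,t_N\in[0,1]$ and consider the depolarizing channels $\Phi_{t_i}=t_i\,\mathrm{id}+(1-t_i)\Delta$ on $\mathcal L(\mathbb C^d)$, and let $K\le\min(N,D_d)$ be a positive integer. If there exists $S\subseteq[N]$ with $|S|=K$ and $\sum_{i\in S}t_i^2>1$, then $(\Phi_{t_1},\dots,\Phi_{t_N})$ is $(N,K)$-incompatible. If $\sum_{i\in S}t_i^2>1$ holds for every $S\subseteq[N]$ with $|S|=K$, then $(\Phi_{t_1},\dots,\Phi_{t_N})$ is $(N,K)$-strongly incompatible.
   Context: $\mathrm{id}(X)=X$, $\Delta(X)=(\operatorname{Tr}X)I/d$. $D_d$ is the maximal number of mutually unbiased orthonormal bases of $\mathbb C^d$ (bases $\mathbf e,\mathbf f$ unbiased if $|\langle e_i,f_j\rangle|=1/\sqrt d$). A family of channels is compatible if there is a channel into the tensor product of the output spaces whose marginals are the given channels. An $N$-tuple of channels is $(N,K)$-incompatible if at least one $K$-element subfamily is incompatible, and $(N,K)$-strongly incompatible if every $K$-element subfamily is incompatible. *)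

theory Defs
  imports Complex_Main "HOL-Library.FuncSet"
begin

text \<open>Operators on a finite-dimensional Hilbert space with orthonormal basis indexed
 by a finite set In are represented as matrices  'i => 'i => complex  (entries outside
 In x In are irrelevant).\<close>

type_synonym 'i op = "'i \<Rightarrow> 'i \<Rightarrow> complex"

definition tr :: "'i set \<Rightarrow> 'i op \<Rightarrow> complex" where
  "tr In A = (\<Sum>i\<in>In. A i i)"

definition psd :: "'i set \<Rightarrow> 'i op \<Rightarrow> bool" where
  "psd In A \<longleftrightarrow> (\<forall>i\<in>In. \<forall>j\<in>In. A j i = cnj (A i j)) \<and>
     (\<forall>v :: 'i \<Rightarrow> complex. 0 \<le> Re (\<Sum>i\<in>In. \<Sum>j\<in>In. cnj (v i) * A i j * v j))"

text \<open>Complete positivity: for every ancilla dimension n, Phi (x) id_n maps positive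
 operators on H_I (x) C^n to positive operators on H_O (x) C^n.\<close>
definition channel :: "'i set \<Rightarrow> 'o set \<Rightarrow> ('i op \<Rightarrow> 'o op) \<Rightarrow> bool" where
  "channel In Out \<Phi> \<longleftrightarrow>
     (\<forall>A B. (\<forall>i\<in>In. \<forall>i'\<in>In. A i i' = B i i') \<longrightarrow> (\<forall>p\<in>Out. \<forall>q\<in>Out. \<Phi> A p q = \<Phi> B p q)) \<and>
     (\<forall>A B. \<forall>p\<in>Out. \<forall>q\<in>Out. \<Phi> (\<lambda>i i'. A i i' + B i i') p q = \<Phi> A p q + \<Phi> B p q) \<and>
     (\<forall>c A. \<forall>p\<in>Out. \<forall>q\<in>Out. \<Phi> (\<lambda>i i'. c * A i i') p q = c * \<Phi> A p q) \<and>
     (\<forall>(n::nat) (X :: ('i \<times> nat) op).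
        psd (In \<times> {..<n}) X \<longrightarrow>
        psd (Out \<times> {..<n}) (\<lambda>(p,a) (q,a'). \<Phi> (\<lambda>i i'. X (i,a) (i',a')) p q)) \<and>
     (\<forall>A. tr Out (\<Phi> A) = tr In A)"

text \<open>Index set of the computational basis of the tensor product (C^d)^{(x) S}.\<close>
definition tens_idx :: "nat \<Rightarrow> nat set \<Rightarrow> (nat \<Rightarrow> nat) set" where
  "tens_idx d S = PiE S (\<lambda>_. {..<d})"

definition marginal :: "nat \<Rightarrow> nat set \<Rightarrow> nat \<Rightarrow> (nat \<Rightarrow> nat) op \<Rightarrow> nat op" where
  "marginal d S j Y = (\<lambda>p q. \<Sum>f\<in>tens_idx d (S - {j}). Y (f(j := p)) (f(j := q)))"

definition compatible :: "nat \<Rightarrow> nat set \<Rightarrow> (nat \<Rightarrow> nat op \<Rightarrow> nat op) \<Rightarrow> bool" where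
  "compatible d S \<Phi> \<longleftrightarrow>
     (\<exists>\<Psi>. channel {..<d} (tens_idx d S) \<Psi> \<and>
        (\<forall>j\<in>S. \<forall>A. \<forall>p<d. \<forall>q<d. marginal d S j (\<Psi> A) p q = \<Phi> j A p q))"

definition NK_incompatible :: "nat \<Rightarrow> nat \<Rightarrow> nat \<Rightarrow> (nat \<Rightarrow> nat op \<Rightarrow> nat op) \<Rightarrow> bool" where
  "NK_incompatible d N K \<Phi> \<longleftrightarrow> (\<exists>S. S \<subseteq> {1..N} \<and> card S = K \<and> \<not> compatible d S \<Phi>)"

definition NK_strongly_incompatible :: "nat \<Rightarrow> nat \<Rightarrow> nat \<Rightarrow> (nat \<Rightarrow> nat op \<Rightarrow> nat op) \<Rightarrow> bool" where
  "NK_strongly_incompatible d N K \<Phi> \<longleftrightarrow> (\<forall>S. S \<subseteq> {1..N} \<and> card S = K \<longrightarrow> \<not> compatible d S \<Phi>)"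

definition depol :: "nat \<Rightarrow> real \<Rightarrow> nat op \<Rightarrow> nat op" where
  "depol d t A = (\<lambda>p q. complex_of_real t * A p q +
      complex_of_real (1 - t) * (if p = q then tr {..<d} A / of_nat d else 0))"

definition inner_d :: "nat \<Rightarrow> (nat \<Rightarrow> complex) \<Rightarrow> (nat \<Rightarrow> complex) \<Rightarrow> complex" where
  "inner_d d u v = (\<Sum>k<d. cnj (u k) * v k)"

definition onb :: "nat \<Rightarrow> (nat \<Rightarrow> nat \<Rightarrow> complex) \<Rightarrow> bool" where
  "onb d e \<longleftrightarrow> (\<forall>i<d. \<forall>j<d. inner_d d (e i) (e j) = (if i = j then 1 else 0))"

definition unbiased :: "nat \<Rightarrow> (nat \<Rightarrow> nat \<Rightarrow> complex) \<Rightarrow> (nat \<Rightarrow> nat \<Rightarrow> complex) \<Rightarrow> bool" where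
  "unbiased d e f \<longleftrightarrow> (\<forall>i<d. \<forall>j<d. cmod (inner_d d (e i) (f j)) = 1 / sqrt (real d))"

definition mub_family :: "nat \<Rightarrow> nat \<Rightarrow> (nat \<Rightarrow> nat \<Rightarrow> nat \<Rightarrow> complex) \<Rightarrow> bool" where
  "mub_family d m B \<longleftrightarrow> (\<forall>k<m. onb d (B k)) \<and> (\<forall>k<m. \<forall>l<m. k \<noteq> l \<longrightarrow> unbiased d (B k) (B l))"

definition D :: "nat \<Rightarrow> nat" where
  "D d = (GREATEST m. \<exists>B. mub_family d m B)"

end

theory Submission
  imports Defs "HOL-Analysis.L2_Norm"
begin

(* Suppose Psi is a joint channel for the depolarizing channels Phi_{t_j}, j in S, and put
   T = sum_{j in S} t_j^2. Pick |S| mutually unbiased bases e_j and, for every multi-index a, let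
     M_a = (1 - 1/d) sqrt T I - sum_j t_j (|e_{j,a_j}><e_{j,a_j}| - I/d).
   The traceless parts of the projectors onto pairwise unbiased unit vectors are orthogonal for the
   Hilbert-Schmidt inner product, with squared norm 1 - 1/d, so Cauchy-Schwarz makes every M_a,
   and hence every Psi(M_a), positive semidefinite. Pairing Psi(M_a) with the product basis vector
   e_a = (x)_j e_{j,a_j} and summing over a, trace preservation and the marginal conditions give
   0 <= (d - 1) (sqrt T - T), i.e. T <= 1. The same orthogonality bounds the number of mutually
   unbiased bases by d^2, so D_d is attained and K <= D_d supplies the bases. *)

section \<open>Inner products on finite index sets\<close>

definition inner_on :: "'i set \<Rightarrow> ('i \<Rightarrow> complex) \<Rightarrow> ('i \<Rightarrow> complex) \<Rightarrow> complex" where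
  "inner_on I x y = (\<Sum>i\<in>I. cnj (x i) * y i)"

definition sqnorm_on :: "'i set \<Rightarrow> ('i \<Rightarrow> complex) \<Rightarrow> real" where
  "sqnorm_on I x = (\<Sum>i\<in>I. (cmod (x i))\<^sup>2)"

lemma cnj_mult_self: "cnj z * z = of_real ((cmod z)\<^sup>2)"
  by (metis complex_norm_square mult.commute)

lemma inner_d_eq_inner_on: "inner_d d = inner_on {..<d}"
  unfolding inner_d_def inner_on_def by (intro ext) simp

lemma inner_on_self: "inner_on I x x = of_real (sqnorm_on I x)"
  unfolding inner_on_def sqnorm_on_def of_real_sum
  by (simp add: cnj_mult_self)

lemma sqnorm_on_nonneg: "0 \<le> sqnorm_on I x"
  unfolding sqnorm_on_def by (simp add: sum_nonneg)

lemma sqnorm_on_eq_0D: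
  assumes "finite I" "sqnorm_on I x = 0" "i \<in> I"
  shows "x i = 0"
  using assms by (simp add: sqnorm_on_def sum_nonneg_eq_0_iff)

lemma cnj_inner_on: "cnj (inner_on I x y) = inner_on I y x"
  unfolding inner_on_def by (simp add: mult.commute)

lemma inner_on_Cauchy_Schwarz:
  "cmod (inner_on I x y) \<le> sqrt (sqnorm_on I x) * sqrt (sqnorm_on I y)"
proof -
  have "cmod (inner_on I x y) \<le> (\<Sum>i\<in>I. \<bar>cmod (x i)\<bar> * \<bar>cmod (y i)\<bar>)"
    unfolding inner_on_def using norm_sum[of "\<lambda>i. cnj (x i) * y i" I] by (simp add: norm_mult)
  also have "\<dots> \<le> L2_set (\<lambda>i. cmod (x i)) I * L2_set (\<lambda>i. cmod (y i)) I"
    by (rule L2_set_mult_ineq)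
  finally show ?thesis
    by (simp add: L2_set_def sqnorm_on_def)
qed

lemma inner_on_sum_right:
  "inner_on I x (\<lambda>i. \<Sum>l\<in>G. b l * v l i) = (\<Sum>l\<in>G. b l * inner_on I x (v l))"
  unfolding inner_on_def
  by (simp add: sum_distrib_left sum_distrib_right mult_ac sum.swap[of _ I])

lemma inner_on_sum_left:
  "inner_on I (\<lambda>i. \<Sum>k\<in>F. a k * u k i) y = (\<Sum>k\<in>F. cnj (a k) * inner_on I (u k) y)"
  using arg_cong[OF inner_on_sum_right[where x=y and G=F and b=a and v=u], of cnj]
  by (simp add: cnj_inner_on)

lemma inner_on_sum_sum:
  "inner_on I (\<lambda>i. \<Sum>k\<in>F. a k * u k i) (\<lambda>i. \<Sum>l\<in>G. b l * v l i)
     = (\<Sum>k\<in>F. \<Sum>l\<in>G. cnj (a k) * b l * inner_on I (u k) (v l))"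
  by (simp add: inner_on_sum_left inner_on_sum_right sum_distrib_left mult_ac)

lemma inner_on_diff_diff:
  "inner_on I (\<lambda>i. x i - y i) (\<lambda>i. x i - y i)
     = inner_on I x x - inner_on I x y - inner_on I y x + inner_on I y y"
  unfolding inner_on_def by (simp add: algebra_simps sum.distrib sum_subtractf)

lemma inner_on_indicator:
  assumes "finite I" "i0 \<in> I"
  shows "inner_on I u (\<lambda>i. if i = i0 then 1 else 0) = cnj (u i0)"
  unfolding inner_on_def using assms
  by (subst sum.cong[OF refl, of _ _ "\<lambda>i. if i = i0 then cnj (u i0) else 0"]) auto

lemma sqnorm_on_indicator:
  assumes "finite I" "i0 \<in> I"
  shows "sqnorm_on I (\<lambda>i. if i = i0 then 1 else 0) = 1"
  using assms by (simp add: sqnorm_on_def if_distrib[of "\<lambda>z. (cmod z)\<^sup>2"] cong: if_cong)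

lemma bessel_residual:
  fixes x :: "'i \<Rightarrow> complex"
  assumes c: "c > 0" and fin: "finite F"
    and orth: "\<And>k l. k \<in> F \<Longrightarrow> l \<in> F \<Longrightarrow> inner_on I (u k) (u l) = (if k = l then of_real c else 0)"
  defines "r \<equiv> \<lambda>i. x i - (\<Sum>k\<in>F. (inner_on I (u k) x / c) * u k i)"
  shows "sqnorm_on I r = sqnorm_on I x - (\<Sum>k\<in>F. (cmod (inner_on I (u k) x))\<^sup>2) / c"
proof -
  let ?a = "\<lambda>k. inner_on I (u k) x / c"
  let ?y = "\<lambda>i. \<Sum>k\<in>F. ?a k * u k i"
  define s :: complex where "s = (\<Sum>k\<in>F. cnj (?a k) * inner_on I (u k) x)"
  have s_eq: "s = of_real ((\<Sum>k\<in>F. (cmod (inner_on I (u k) x))\<^sup>2) / c)"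
    unfolding s_def of_real_divide of_real_sum sum_divide_distrib
    using c by (intro sum.cong refl) (simp add: cnj_mult_self)
  have "inner_on I ?y x = s"
    unfolding s_def by (rule inner_on_sum_left)
  moreover have "inner_on I ?y ?y = s"
  proof -
    have "inner_on I ?y ?y = (\<Sum>k\<in>F. \<Sum>l\<in>F. if k = l then cnj (?a k) * ?a k * of_real c else 0)"
      unfolding inner_on_sum_sum by (intro sum.cong refl) (simp add: orth)
    also have "\<dots> = s"
      unfolding s_def using fin c by (intro sum.cong refl) simp
    finally show ?thesis .
  qed
  moreover have "inner_on I x ?y = cnj s"
    using \<open>inner_on I ?y x = s\<close> cnj_inner_on by metis
  moreover have "cnj s = s"
    unfolding s_eq by simp
  ultimately have "inner_on I r r = inner_on I x x - s"
    unfolding r_def inner_on_diff_diff by simp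
  then show ?thesis
    unfolding inner_on_self s_eq by (metis of_real_diff of_real_eq_iff)
qed

lemma bessel_inequality:
  assumes "c > 0" "finite F"
    and "\<And>k l. k \<in> F \<Longrightarrow> l \<in> F \<Longrightarrow> inner_on I (u k) (u l) = (if k = l then of_real c else 0)"
  shows "(\<Sum>k\<in>F. (cmod (inner_on I (u k) x))\<^sup>2) \<le> c * sqnorm_on I x"
  using bessel_residual[OF assms, of x] sqnorm_on_nonneg[of I] \<open>c > 0\<close>
  by (smt (verit) divide_le_eq mult.commute)

definition resolves_identity :: "'a set \<Rightarrow> 'i set \<Rightarrow> ('a \<Rightarrow> 'i \<Rightarrow> complex) \<Rightarrow> bool" where
  "resolves_identity A I v \<longleftrightarrow>
     (\<forall>f\<in>I. \<forall>g\<in>I. (\<Sum>a\<in>A. cnj (v a f) * v a g) = (if f = g then 1 else 0))"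

lemma onb_sqnorm:
  assumes "onb d e" "x < d"
  shows "sqnorm_on {..<d} (e x) = 1"
proof -
  have "inner_on {..<d} (e x) (e x) = 1"
    using assms by (simp add: onb_def inner_d_eq_inner_on)
  then show ?thesis
    by (simp add: inner_on_self)
qed

lemma onb_orthonormal:
  "onb d e \<Longrightarrow> k \<in> {..<d} \<Longrightarrow> l \<in> {..<d} \<Longrightarrow>
     inner_on {..<d} (e k) (e l) = (if k = l then of_real 1 else 0)"
  unfolding onb_def inner_d_eq_inner_on by simp

(* By Bessel each column x \<mapsto> e x p has squared norm at most 1, and these sum to d. *)
lemma onb_column_sqnorm:
  assumes onb: "onb d e" and p: "p < d"
  shows "(\<Sum>x<d. (cmod (e x p))\<^sup>2) = 1"
proof -
  have col_le: "(\<Sum>x<d. (cmod (e x p'))\<^sup>2) \<le> 1" if "p' \<in> {..<d}" for p'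
    using bessel_inequality[OF zero_less_one finite_lessThan onb_orthonormal[OF onb],
        where x="\<lambda>i. if i = p' then 1 else 0"] that
    by (simp add: inner_on_indicator sqnorm_on_indicator)
  have "(\<Sum>p'<d. \<Sum>x<d. (cmod (e x p'))\<^sup>2) = (\<Sum>x<d. sqnorm_on {..<d} (e x))"
    unfolding sqnorm_on_def by (rule sum.swap)
  also have "\<dots> = d"
    using onb by (simp add: onb_sqnorm)
  finally have "(\<Sum>p'<d. 1 - (\<Sum>x<d. (cmod (e x p'))\<^sup>2)) = 0"
    by (simp add: sum_subtractf)
  then have "\<forall>p'\<in>{..<d}. 1 - (\<Sum>x<d. (cmod (e x p'))\<^sup>2) = 0"
    using col_le by (subst (asm) sum_nonneg_eq_0_iff) auto
  then show ?thesis
    using p by simp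
qed

lemma parseval_imp_expansion:
  assumes "c > 0" "finite F"
    and "\<And>k l. k \<in> F \<Longrightarrow> l \<in> F \<Longrightarrow> inner_on I (u k) (u l) = (if k = l then of_real c else 0)"
    and "finite I" "i \<in> I"
    and parseval: "(\<Sum>k\<in>F. (cmod (inner_on I (u k) x))\<^sup>2) = c * sqnorm_on I x"
  shows "x i = (\<Sum>k\<in>F. (inner_on I (u k) x / c) * u k i)"
proof -
  have "sqnorm_on I (\<lambda>i. x i - (\<Sum>k\<in>F. (inner_on I (u k) x / c) * u k i)) = 0"
    using bessel_residual[OF assms(1-3), of x] parseval \<open>c > 0\<close> by simp
  then have "x i - (\<Sum>k\<in>F. (inner_on I (u k) x / c) * u k i) = 0"
    by (rule sqnorm_on_eq_0D[OF assms(4) _ assms(5)])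
  then show ?thesis
    by simp
qed

lemma onb_resolves_identity:
  assumes onb: "onb d e"
  shows "resolves_identity {..<d} {..<d} e"
  unfolding resolves_identity_def
proof (intro ballI)
  fix p q assume p: "p \<in> {..<d}" and q: "q \<in> {..<d}"
  let ?\<delta> = "\<lambda>i. if i = p then 1 else 0 :: complex"
  have coeff: "inner_on {..<d} (e x) ?\<delta> = cnj (e x p)" for x
    using p by (simp add: inner_on_indicator)
  have "(\<Sum>x\<in>{..<d}. (cmod (inner_on {..<d} (e x) ?\<delta>))\<^sup>2) = 1 * sqnorm_on {..<d} ?\<delta>"
    unfolding coeff using p by (simp add: sqnorm_on_indicator onb_column_sqnorm[OF onb])
  from parseval_imp_expansion[OF zero_less_one finite_lessThan onb_orthonormal[OF onb]
      finite_lessThan q this]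
  show "(\<Sum>x<d. cnj (e x p) * e x q) = (if p = q then 1 else 0)"
    by (auto simp: coeff split: if_splits)
qed

section \<open>Quadratic forms and the Hilbert-Schmidt inner product\<close>

definition qform :: "'i set \<Rightarrow> ('i \<Rightarrow> complex) \<Rightarrow> 'i op \<Rightarrow> complex" where
  "qform I v A = (\<Sum>i\<in>I. \<Sum>j\<in>I. cnj (v i) * A i j * v j)"

lemma psd_iff_qform:
  "psd I A \<longleftrightarrow> (\<forall>i\<in>I. \<forall>j\<in>I. A j i = cnj (A i j)) \<and> (\<forall>v. 0 \<le> Re (qform I v A))"
  unfolding psd_def qform_def ..

lemma qform_cong: "(\<And>f g. f \<in> I \<Longrightarrow> g \<in> I \<Longrightarrow> A f g = B f g) \<Longrightarrow> qform I v A = qform I v B"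
  unfolding qform_def by (intro sum.cong refl) auto

lemma qform_diff: "qform I v (\<lambda>p q. A p q - B p q) = qform I v A - qform I v B"
  unfolding qform_def by (simp add: algebra_simps sum_subtractf)

lemma qform_scale: "qform I v (\<lambda>p q. c * A p q) = c * qform I v A"
  unfolding qform_def by (simp add: sum_distrib_left mult_ac)

lemma qform_sum: "qform I v (\<lambda>p q. \<Sum>j\<in>F. A j p q) = (\<Sum>j\<in>F. qform I v (A j))"
  unfolding qform_def by (simp add: sum_distrib_left sum_distrib_right sum.swap[of _ F])

lemma qform_identity:
  assumes "finite I"
  shows "qform I v (\<lambda>p q. if p = q then a else 0) = a * of_real (sqnorm_on I v)"
proof -
  have "qform I v (\<lambda>p q. if p = q then a else 0) = (\<Sum>i\<in>I. a * (cnj (v i) * v i))"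
    unfolding qform_def
  proof (intro sum.cong refl)
    fix i assume "i \<in> I"
    have "(\<Sum>j\<in>I. cnj (v i) * (if i = j then a else 0) * v j)
        = (\<Sum>j\<in>I. if i = j then a * (cnj (v i) * v i) else 0)"
      by (intro sum.cong refl) auto
    then show "(\<Sum>j\<in>I. cnj (v i) * (if i = j then a else 0) * v j) = a * (cnj (v i) * v i)"
      using assms \<open>i \<in> I\<close> by simp
  qed
  then show ?thesis
    by (simp add: sum_distrib_left[symmetric] inner_on_self[symmetric] inner_on_def)
qed

lemma qform_rank_one:
  "qform I v (\<lambda>p q. w p * cnj (w q)) = of_real ((cmod (inner_on I w v))\<^sup>2)"
proof -
  have "qform I v (\<lambda>p q. w p * cnj (w q)) = (\<Sum>i\<in>I. cnj (v i) * w i) * (\<Sum>j\<in>I. cnj (w j) * v j)"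
    unfolding qform_def sum_product by (intro sum.cong refl) (simp add: mult_ac)
  also have "\<dots> = cnj (inner_on I w v) * inner_on I w v"
    unfolding cnj_inner_on by (simp add: inner_on_def)
  finally show ?thesis
    by (simp add: cnj_mult_self)
qed

lemma sum_qform_resolves_identity:
  assumes "finite I" and "resolves_identity A I v"
  shows "(\<Sum>a\<in>A. qform I (v a) Y) = tr I Y"
proof -
  have "(\<Sum>a\<in>A. qform I (v a) Y) = (\<Sum>f\<in>I. \<Sum>g\<in>I. Y f g * (\<Sum>a\<in>A. cnj (v a f) * v a g))"
    unfolding qform_def sum_distrib_left
    by (simp add: sum.swap[of _ A] mult_ac)
  also have "\<dots> = (\<Sum>f\<in>I. \<Sum>g\<in>I. if f = g then Y f f else 0)"
    using assms(2) unfolding resolves_identity_def by (intro sum.cong refl) auto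
  also have "\<dots> = tr I Y"
    unfolding tr_def using assms(1) by simp
  finally show ?thesis .
qed

definition hs_inner :: "'i set \<Rightarrow> 'i op \<Rightarrow> 'i op \<Rightarrow> complex" where
  "hs_inner I A B = inner_on (I \<times> I) (case_prod A) (case_prod B)"

lemma hs_inner_eq: "hs_inner I A B = (\<Sum>p\<in>I. \<Sum>q\<in>I. cnj (A p q) * B p q)"
  unfolding hs_inner_def inner_on_def sum.cartesian_product by (intro sum.cong refl) auto

lemma hs_inner_sum_sum:
  "hs_inner I (\<lambda>p q. \<Sum>k\<in>F. a k * U k p q) (\<lambda>p q. \<Sum>l\<in>G. b l * V l p q)
     = (\<Sum>k\<in>F. \<Sum>l\<in>G. cnj (a k) * b l * hs_inner I (U k) (V l))"
  unfolding hs_inner_def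
  using inner_on_sum_sum[where I="I \<times> I" and a=a and u="\<lambda>k. case_prod (U k)" and b=b
      and v="\<lambda>l. case_prod (V l)"]
  by (simp add: case_prod_beta')

lemma hs_inner_Cauchy_Schwarz:
  "cmod (hs_inner I A B) \<le> sqrt (Re (hs_inner I A A)) * sqrt (Re (hs_inner I B B))"
  unfolding hs_inner_def inner_on_self by (simp add: inner_on_Cauchy_Schwarz)

definition traceless_proj :: "nat \<Rightarrow> (nat \<Rightarrow> complex) \<Rightarrow> nat op" where
  "traceless_proj d u =
     (\<lambda>p q. u p * cnj (u q) - (if p = q then of_real (sqnorm_on {..<d} u / real d) else 0))"

lemma cnj_traceless_proj: "cnj (traceless_proj d u p q) = traceless_proj d u q p"
  unfolding traceless_proj_def by auto

lemma trace_traceless_proj: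
  assumes "d > 0"
  shows "tr {..<d} (traceless_proj d u) = 0"
  unfolding tr_def traceless_proj_def using assms
  by (simp add: sum_subtractf mult.commute[of "u _"] cnj_mult_self sqnorm_on_def of_real_sum)

lemma qform_traceless_proj:
  "qform {..<d} v (traceless_proj d w)
     = of_real ((cmod (inner_d d w v))\<^sup>2 - sqnorm_on {..<d} w * sqnorm_on {..<d} v / real d)"
  unfolding traceless_proj_def qform_diff qform_rank_one qform_identity[OF finite_lessThan]
    inner_d_eq_inner_on
  by simp

lemma qform_traceless_proj_self:
  assumes "sqnorm_on {..<d} u = 1"
  shows "qform {..<d} u (traceless_proj d u) = of_real (1 - 1 / real d)"
  using assms by (simp add: qform_traceless_proj inner_d_eq_inner_on inner_on_self)

lemma hs_inner_traceless_proj_left: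
  "hs_inner {..<d} (traceless_proj d v) Y
     = qform {..<d} v Y - of_real (sqnorm_on {..<d} v / real d) * tr {..<d} Y"
proof -
  let ?n = "of_real (sqnorm_on {..<d} v / real d) :: complex"
  have "hs_inner {..<d} (traceless_proj d v) Y
      = (\<Sum>p<d. \<Sum>q<d. cnj (v p) * Y p q * v q - (if p = q then ?n * Y p q else 0))"
    unfolding hs_inner_eq traceless_proj_def by (intro sum.cong refl) (auto simp: algebra_simps)
  also have "\<dots> = qform {..<d} v Y - ?n * tr {..<d} Y"
    unfolding qform_def tr_def by (simp add: sum_subtractf sum_distrib_left)
  finally show ?thesis .
qed

lemma hs_inner_traceless_proj:
  assumes "d > 0"
  shows "hs_inner {..<d} (traceless_proj d v) (traceless_proj d w)
     = of_real ((cmod (inner_d d w v))\<^sup>2 - sqnorm_on {..<d} w * sqnorm_on {..<d} v / real d)"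
  using assms by (simp add: hs_inner_traceless_proj_left trace_traceless_proj qform_traceless_proj)

lemma hs_inner_traceless_proj_unbiased:
  assumes "d > 0" and unit: "\<And>j. j \<in> S \<Longrightarrow> sqnorm_on {..<d} (w j) = 1"
    and unbiased: "\<And>j k. j \<in> S \<Longrightarrow> k \<in> S \<Longrightarrow> j \<noteq> k \<Longrightarrow>
        cmod (inner_d d (w j) (w k)) = 1 / sqrt (real d)"
    and "j \<in> S" "k \<in> S"
  shows "hs_inner {..<d} (traceless_proj d (w j)) (traceless_proj d (w k))
     = (if j = k then of_real (1 - 1 / real d) else 0)"
proof (cases "j = k")
  case True
  then show ?thesis
    using assms by (simp add: hs_inner_traceless_proj inner_d_eq_inner_on inner_on_self)
next
  case False
  then show ?thesis
    using assms by (simp add: hs_inner_traceless_proj power_divide)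
qed

(* For traceless Z, <v, Z v> is the Hilbert-Schmidt product of Z with the traceless part of
   |v><v|; apply Cauchy-Schwarz. *)
lemma psd_unbiased_combination:
  assumes d: "d > 0" and fin: "finite S"
    and unit: "\<And>j. j \<in> S \<Longrightarrow> sqnorm_on {..<d} (w j) = 1"
    and unbiased: "\<And>j k. j \<in> S \<Longrightarrow> k \<in> S \<Longrightarrow> j \<noteq> k \<Longrightarrow>
        cmod (inner_d d (w j) (w k)) = 1 / sqrt (real d)"
  shows "psd {..<d} (\<lambda>p q.
      of_real ((1 - 1 / real d) * sqrt (\<Sum>j\<in>S. (t j)\<^sup>2)) * (if p = q then 1 else 0)
        - (\<Sum>j\<in>S. of_real (t j) * traceless_proj d (w j) p q))"
    (is "psd _ (\<lambda>p q. of_real (?c * sqrt ?T) * _ - ?Z p q)")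
proof -
  have c: "?c \<ge> 0" and T: "?T \<ge> 0"
    using d by (auto simp: sum_nonneg)
  have trace_Z: "tr {..<d} ?Z = 0"
    unfolding tr_def using sum.swap[of "\<lambda>p j. of_real (t j) * traceless_proj d (w j) p p"]
    by (simp add: sum_distrib_left[symmetric] tr_def[symmetric] trace_traceless_proj d)
  have "hs_inner {..<d} ?Z ?Z
      = (\<Sum>j\<in>S. \<Sum>k\<in>S. of_real (t j) * of_real (t k) * (if j = k then of_real ?c else 0))"
    unfolding hs_inner_sum_sum
    by (intro sum.cong refl) (subst hs_inner_traceless_proj_unbiased[OF d unit unbiased]; simp)
  also have "\<dots> = of_real (?c * ?T)"
    using fin by (simp add: if_distrib[of "\<lambda>z. _ * z"] sum_distrib_left power2_eq_square mult_ac
        cong: if_cong)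
  finally have norm_Z: "hs_inner {..<d} ?Z ?Z = of_real (?c * ?T)" .
  have "0 \<le> Re (qform {..<d} v (\<lambda>p q. of_real (?c * sqrt ?T) * (if p = q then 1 else 0) - ?Z p q))"
    for v
  proof -
    define n where "n = sqnorm_on {..<d} v"
    have n: "n \<ge> 0"
      unfolding n_def by (rule sqnorm_on_nonneg)
    have "cmod (inner_d d v v) = n"
      using n unfolding n_def inner_d_eq_inner_on inner_on_self by simp
    then have norm_v:
        "hs_inner {..<d} (traceless_proj d v) (traceless_proj d v) = of_real (?c * n\<^sup>2)"
      using d by (simp add: hs_inner_traceless_proj n_def[symmetric] power2_eq_square algebra_simps)
    have "Re (qform {..<d} v ?Z) = Re (hs_inner {..<d} (traceless_proj d v) ?Z)"
      by (simp add: hs_inner_traceless_proj_left trace_Z)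
    also have "\<dots> \<le> sqrt (?c * n\<^sup>2) * sqrt (?c * ?T)"
      using hs_inner_Cauchy_Schwarz[of "{..<d}" "traceless_proj d v" ?Z] complex_Re_le_cmod
      unfolding norm_v norm_Z by (smt (verit) Re_complex_of_real)
    also have "\<dots> = ?c * sqrt ?T * n"
      using c T n by (simp add: real_sqrt_mult)
    finally show ?thesis
      unfolding qform_diff qform_scale qform_identity[OF finite_lessThan] n_def by simp
  qed
  moreover have "\<forall>p\<in>{..<d}. \<forall>q\<in>{..<d}.
      of_real (?c * sqrt ?T) * (if q = p then 1 else 0) - ?Z q p
        = cnj (of_real (?c * sqrt ?T) * (if p = q then 1 else 0) - ?Z p q)"
    by (simp add: cnj_traceless_proj)
  ultimately show ?thesis
    unfolding psd_iff_qform by blast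
qed

section \<open>Mutually unbiased bases\<close>

lemma mub_family_size_le:
  assumes d: "d \<ge> 2" and mub: "mub_family d m B"
  shows "m \<le> d\<^sup>2"
proof -
  let ?c = "1 - 1 / real d"
  let ?I = "{..<d} \<times> {..<d}"
  let ?U = "\<lambda>k. case_prod (traceless_proj d (B k 0))"
  have c: "?c > 0"
    using d by simp
  have orth: "inner_on ?I (?U k) (?U l) = (if k = l then of_real ?c else 0)"
    if "k \<in> {..<m}" "l \<in> {..<m}" for k l
    using hs_inner_traceless_proj_unbiased[of d "{..<m}" "\<lambda>k. B k 0"] mub d that
    unfolding hs_inner_def mub_family_def unbiased_def by (simp add: onb_sqnorm)
  have entry: "(\<Sum>k<m. (cmod (?U k i))\<^sup>2) \<le> ?c" if i: "i \<in> ?I" for i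
    using bessel_inequality[OF c finite_lessThan orth, where x="\<lambda>i'. if i' = i then 1 else 0"]
    by (simp add: inner_on_indicator sqnorm_on_indicator i)
  have "sqnorm_on ?I (?U k) = ?c" if "k < m" for k
    using orth[of k k] that unfolding inner_on_self by (simp del: of_real_diff of_real_divide)
  then have "real m * ?c = (\<Sum>k<m. sqnorm_on ?I (?U k))"
    by simp
  also have "\<dots> = (\<Sum>i\<in>?I. \<Sum>k<m. (cmod (?U k i))\<^sup>2)"
    unfolding sqnorm_on_def by (rule sum.swap)
  also have "\<dots> \<le> real (d\<^sup>2) * ?c"
    using sum_mono[of ?I _ "\<lambda>_. ?c", OF entry] by (simp add: power2_eq_square)
  finally show ?thesis
    using c by simp
qed

lemma mub_family_mono: "mub_family d m B \<Longrightarrow> k \<le> m \<Longrightarrow> mub_family d k B"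
  unfolding mub_family_def by auto

lemma ex_mub_family:
  assumes "d \<ge> 2" and "K \<le> D d"
  shows "\<exists>B. mub_family d K B"
proof -
  have "\<exists>B. mub_family d (D d) B"
    unfolding D_def
    by (rule GreatestI_nat[where k=0 and b="d\<^sup>2"])
      (auto simp: mub_family_def intro: mub_family_size_le[OF assms(1)])
  then show ?thesis
    using mub_family_mono assms(2) by blast
qed

lemma mub_family_on_set:
  assumes "finite S" and "mub_family d (card S) B"
  obtains e where "\<And>j. j \<in> S \<Longrightarrow> onb d (e j)"
    and "\<And>j k. j \<in> S \<Longrightarrow> k \<in> S \<Longrightarrow> j \<noteq> k \<Longrightarrow> unbiased d (e j) (e k)"
proof -
  obtain \<beta> where \<beta>: "bij_betw \<beta> S {0..<card S}"
    using ex_bij_betw_finite_nat[OF assms(1)] by blast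
  have "\<beta> j < card S" if "j \<in> S" for j
    using bij_betwE[OF \<beta>] that by auto
  moreover have "\<beta> j \<noteq> \<beta> k" if "j \<in> S" "k \<in> S" "j \<noteq> k" for j k
    using bij_betw_imp_inj_on[OF \<beta>] that by (auto dest: inj_onD)
  ultimately show ?thesis
    using assms(2) that[of "\<lambda>j. B (\<beta> j)"] unfolding mub_family_def by blast
qed

section \<open>Product bases and marginals\<close>

lemma sum_PiE_insert:
  assumes "j \<notin> S"
  shows "(\<Sum>a\<in>PiE (insert j S) B. F a) = (\<Sum>x\<in>B j. \<Sum>h\<in>PiE S B. F (h(j := x)))"
proof -
  have "(\<Sum>a\<in>PiE (insert j S) B. F a) = (\<Sum>z\<in>B j \<times> PiE S B. F ((\<lambda>(x, h). h(j := x)) z))"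
    unfolding PiE_insert_eq by (rule sum.reindex[OF inj_combinator[OF assms], unfolded comp_def])
  then show ?thesis
    by (simp add: sum.cartesian_product split_def)
qed

(* e k x is the x-th vector of the k-th basis; a \<in> tens_idx d S picks one vector from each basis. *)
definition tensor_basis ::
    "nat set \<Rightarrow> (nat \<Rightarrow> nat \<Rightarrow> nat \<Rightarrow> complex) \<Rightarrow> (nat \<Rightarrow> nat) \<Rightarrow> (nat \<Rightarrow> nat) \<Rightarrow> complex"
  where "tensor_basis S e a f = (\<Prod>k\<in>S. e k (a k) (f k))"

abbreviation tensor_basis_sum ::
    "nat \<Rightarrow> nat set \<Rightarrow> (nat \<Rightarrow> nat \<Rightarrow> nat \<Rightarrow> complex) \<Rightarrow> ((nat \<Rightarrow> nat) \<Rightarrow> (nat \<Rightarrow> nat) op) \<Rightarrow> complex"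
  where "tensor_basis_sum d S e Y \<equiv>
    \<Sum>a\<in>tens_idx d S. qform (tens_idx d S) (tensor_basis S e a) (Y a)"

lemma tensor_basis_insert:
  assumes "finite S" "j \<notin> S"
  shows "tensor_basis (insert j S) e (a(j := x)) f = e j x (f j) * tensor_basis S e a f"
  unfolding tensor_basis_def using assms by (auto intro!: prod.cong)

lemma tensor_basis_upd_index:
  "j \<notin> S \<Longrightarrow> tensor_basis S e a (f(j := p)) = tensor_basis S e a f"
  unfolding tensor_basis_def by (auto intro!: prod.cong)

lemma resolves_identity_tensor_basis:
  assumes fin: "finite S" and onb: "\<And>k. k \<in> S \<Longrightarrow> onb d (e k)"
  shows "resolves_identity (tens_idx d S) (tens_idx d S) (tensor_basis S e)"
  unfolding resolves_identity_def
proof (intro ballI)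
  fix f g assume f: "f \<in> tens_idx d S" and g: "g \<in> tens_idx d S"
  have "(\<Sum>a\<in>tens_idx d S. cnj (tensor_basis S e a f) * tensor_basis S e a g)
      = (\<Prod>k\<in>S. \<Sum>x<d. cnj (e k x (f k)) * e k x (g k))"
    unfolding tens_idx_def tensor_basis_def using fin
    by (simp add: prod_sum_PiE prod.distrib)
  also have "\<dots> = (\<Prod>k\<in>S. if f k = g k then 1 else 0)"
  proof (intro prod.cong refl)
    fix k assume k: "k \<in> S"
    then have "f k \<in> {..<d}" "g k \<in> {..<d}"
      using f g by (auto simp: tens_idx_def)
    then show "(\<Sum>x<d. cnj (e k x (f k)) * e k x (g k)) = (if f k = g k then 1 else 0)"
      using onb_resolves_identity[OF onb[OF k]] unfolding resolves_identity_def by blast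
  qed
  also have "\<dots> = (if f = g then 1 else 0)"
    using fin f g by (auto simp: tens_idx_def intro: PiE_ext)
  finally show "(\<Sum>a\<in>tens_idx d S. cnj (tensor_basis S e a f) * tensor_basis S e a g)
      = (if f = g then 1 else 0)" .
qed

(* <u| Y |u> taken in the tensor factor j only, leaving an operator on the other factors. *)
definition partial_qform :: "nat \<Rightarrow> nat \<Rightarrow> (nat \<Rightarrow> complex) \<Rightarrow> (nat \<Rightarrow> nat) op \<Rightarrow> (nat \<Rightarrow> nat) op" where
  "partial_qform d j u Y = (\<lambda>f g. \<Sum>p<d. \<Sum>q<d. cnj (u p) * Y (f(j := p)) (g(j := q)) * u q)"

lemma qform_tensor_factor:
  assumes j: "j \<notin> S" and w: "\<And>f p. w (f(j := p)) = w f"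
  shows "qform (tens_idx d (insert j S)) (\<lambda>f. u (f j) * w f) Y
       = qform (tens_idx d S) w (partial_qform d j u Y)"
proof -
  let ?T = "tens_idx d S"
  let ?X = "\<lambda>p f q g. cnj (u p) * cnj (w f) * Y (f(j := p)) (g(j := q)) * u q * w g"
  have "qform (tens_idx d (insert j S)) (\<lambda>f. u (f j) * w f) Y
      = (\<Sum>p<d. \<Sum>f\<in>?T. \<Sum>q<d. \<Sum>g\<in>?T. ?X p f q g)"
    unfolding qform_def tens_idx_def sum_PiE_insert[OF j] by (simp add: w mult_ac)
  also have "\<dots> = (\<Sum>f\<in>?T. \<Sum>p<d. \<Sum>q<d. \<Sum>g\<in>?T. ?X p f q g)"
    by (rule sum.swap)
  also have "\<dots> = (\<Sum>f\<in>?T. \<Sum>p<d. \<Sum>g\<in>?T. \<Sum>q<d. ?X p f q g)"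
    by (intro sum.cong refl sum.swap)
  also have "\<dots> = (\<Sum>f\<in>?T. \<Sum>g\<in>?T. \<Sum>p<d. \<Sum>q<d. ?X p f q g)"
    by (intro sum.cong refl sum.swap)
  also have "\<dots> = qform ?T w (partial_qform d j u Y)"
    unfolding qform_def partial_qform_def by (simp add: sum_distrib_left sum_distrib_right mult_ac)
  finally show ?thesis .
qed

lemma trace_partial_qform:
  assumes "j \<notin> S"
  shows "tr (tens_idx d S) (partial_qform d j u Y) = qform {..<d} u (marginal d (insert j S) j Y)"
proof -
  have "insert j S - {j} = S"
    using assms by auto
  then show ?thesis
    unfolding tr_def partial_qform_def qform_def marginal_def
    by (simp add: sum_distrib_left sum_distrib_right sum.swap[of _ "tens_idx d S"] mult_ac)
qed

lemma tensor_basis_sum_marginal: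
  assumes fin: "finite S" and onb: "\<And>k. k \<in> S \<Longrightarrow> onb d (e k)" and j: "j \<in> S"
  shows "tensor_basis_sum d S e (\<lambda>a. Y (a j))
       = (\<Sum>x<d. qform {..<d} (e j x) (marginal d S j (Y x)))"
proof -
  define S' where "S' = S - {j}"
  have S: "S = insert j S'" and j': "j \<notin> S'" and fin': "finite S'"
    using j fin unfolding S'_def by auto
  have "tensor_basis_sum d S e (\<lambda>a. Y (a j))
      = (\<Sum>x<d. \<Sum>h\<in>tens_idx d S'. qform (tens_idx d S) (tensor_basis S e (h(j := x))) (Y x))"
    unfolding tens_idx_def S sum_PiE_insert[OF j'] by simp
  also have "\<dots> = (\<Sum>x<d. \<Sum>h\<in>tens_idx d S'.
      qform (tens_idx d S') (tensor_basis S' e h) (partial_qform d j (e j x) (Y x)))"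
    unfolding S tensor_basis_insert[OF fin' j']
    by (intro sum.cong refl qform_tensor_factor[OF j' tensor_basis_upd_index[OF j']])
  also have "\<dots> = (\<Sum>x<d. tr (tens_idx d S') (partial_qform d j (e j x) (Y x)))"
  proof -
    have "finite (tens_idx d S')"
      using fin' by (simp add: tens_idx_def finite_PiE)
    moreover have "resolves_identity (tens_idx d S') (tens_idx d S') (tensor_basis S' e)"
      using fin' onb S by (simp add: resolves_identity_tensor_basis)
    ultimately show ?thesis
      by (simp add: sum_qform_resolves_identity)
  qed
  also have "\<dots> = (\<Sum>x<d. qform {..<d} (e j x) (marginal d S j (Y x)))"
    unfolding S trace_partial_qform[OF j'] ..
  finally show ?thesis .
qed

section \<open>Channels\<close>

lemma channel_add:
  "channel In Out \<Psi> \<Longrightarrow> p \<in> Out \<Longrightarrow> q \<in> Out \<Longrightarrow>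
     \<Psi> (\<lambda>i i'. A i i' + B i i') p q = \<Psi> A p q + \<Psi> B p q"
  unfolding channel_def by blast

lemma channel_scale:
  "channel In Out \<Psi> \<Longrightarrow> p \<in> Out \<Longrightarrow> q \<in> Out \<Longrightarrow> \<Psi> (\<lambda>i i'. c * A i i') p q = c * \<Psi> A p q"
  unfolding channel_def by blast

lemma channel_diff:
  assumes "channel In Out \<Psi>" "p \<in> Out" "q \<in> Out"
  shows "\<Psi> (\<lambda>i i'. A i i' - B i i') p q = \<Psi> A p q - \<Psi> B p q"
  using channel_add[OF assms, of A "\<lambda>i i'. -1 * B i i'"] channel_scale[OF assms, of "-1" B] by simp

lemma channel_lincomb:
  assumes ch: "channel In Out \<Psi>" and pq: "p \<in> Out" "q \<in> Out"
  shows "\<Psi> (\<lambda>i i'. \<Sum>j\<in>F. c j * A j i i') p q = (\<Sum>j\<in>F. c j * \<Psi> (A j) p q)"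
proof (induction F rule: infinite_finite_induct)
  case (infinite F)
  then show ?case
    using channel_scale[OF ch pq, of 0] by simp
next
  case empty
  then show ?case
    using channel_scale[OF ch pq, of 0] by simp
next
  case (insert j F)
  then show ?case
    using channel_add[OF ch pq, of "\<lambda>i i'. c j * A j i i'"] channel_scale[OF ch pq] by simp
qed

lemma channel_trace: "channel In Out \<Psi> \<Longrightarrow> tr Out (\<Psi> A) = tr In A"
  unfolding channel_def by blast

lemma sum_times_singleton: "(\<Sum>x\<in>A \<times> {b}. f x) = (\<Sum>a\<in>A. f (a, b))"
  by (rule sum.reindex_bij_witness[of _ "\<lambda>a. (a, b)" fst]) auto

lemma psd_ancilla_one: "psd (I \<times> {..<1::nat}) (\<lambda>(i, a) (j, b). A i j) \<longleftrightarrow> psd I A"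
proof -
  have one: "{..<1::nat} = {0}"
    by auto
  have qform: "qform (I \<times> {0}) v (\<lambda>(i, a) (j, b). A i j) = qform I (\<lambda>i. v (i, 0)) A" for v
    unfolding qform_def sum_times_singleton by simp
  have nonneg: "(\<forall>v. 0 \<le> Re (qform I (\<lambda>i. v (i, 0)) A)) \<longleftrightarrow> (\<forall>v. 0 \<le> Re (qform I v A))"
  proof
    assume nonneg: "\<forall>v. 0 \<le> Re (qform I (\<lambda>i. v (i, 0)) A)"
    show "\<forall>v. 0 \<le> Re (qform I v A)"
    proof
      fix v :: "_ \<Rightarrow> complex"
      show "0 \<le> Re (qform I v A)"
        using nonneg[rule_format, of "\<lambda>(i, _). v i"] by simp
    qed
  qed simp
  have herm: "(\<forall>x\<in>I \<times> {0}. \<forall>y\<in>I \<times> {0}.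
        (\<lambda>(i, a) (j, b). A i j) y x = cnj ((\<lambda>(i, a) (j, b). A i j) x y))
      \<longleftrightarrow> (\<forall>i\<in>I. \<forall>j\<in>I. A j i = cnj (A i j))" (is "?lifted \<longleftrightarrow> ?herm")
  proof
    assume ?lifted
    show ?herm
    proof (intro ballI)
      fix i j assume "i \<in> I" "j \<in> I"
      then show "A j i = cnj (A i j)"
        using \<open>?lifted\<close>[rule_format, of "(i, 0)" "(j, 0)"] by simp
    qed
  next
    assume ?herm
    show ?lifted
    proof (intro ballI)
      fix x y assume "x \<in> I \<times> {0}" "y \<in> I \<times> {0}"
      then obtain i j where ij: "x = (i, 0)" "y = (j, 0)" "i \<in> I" "j \<in> I"
        by auto
      then have "A j i = cnj (A i j)"
        using \<open>?herm\<close> by blast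
      then show "(\<lambda>(i, a) (j, b). A i j) y x = cnj ((\<lambda>(i, a) (j, b). A i j) x y)"
        using ij by simp
    qed
  qed
  show ?thesis
    unfolding psd_iff_qform one qform nonneg herm ..
qed

lemma psd_channel:
  fixes \<Psi> :: "'i op \<Rightarrow> 'o op"
  assumes ch: "channel In Out \<Psi>" and A: "psd In A"
  shows "psd Out (\<Psi> A)"
proof -
  have cp: "\<forall>(n::nat) (X :: ('i \<times> nat) op). psd (In \<times> {..<n}) X \<longrightarrow>
      psd (Out \<times> {..<n}) (\<lambda>(p, a) (q, a'). \<Psi> (\<lambda>i i'. X (i, a) (i', a')) p q)"
    using ch unfolding channel_def by (elim conjE)
  have "psd (In \<times> {..<1::nat}) (\<lambda>(i, a) (j, b). A i j)"
    using A by (simp only: psd_ancilla_one)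
  from cp[rule_format, OF this] have "psd (Out \<times> {..<1::nat}) (\<lambda>(p, a) (q, a'). \<Psi> A p q)"
    by (simp only: prod.case)
  then show ?thesis
    by (simp only: psd_ancilla_one)
qed

section \<open>Incompatibility of depolarizing channels\<close>

lemma depol_traceless:
  assumes "tr {..<d} A = 0"
  shows "depol d s A = (\<lambda>p q. of_real s * A p q)"
  unfolding depol_def assms by (intro ext) simp

lemma tensor_basis_sum_depol_marginal:
  assumes d: "d > 0" and fin: "finite S" and onb: "\<And>k. k \<in> S \<Longrightarrow> onb d (e k)" and j: "j \<in> S"
    and marg: "\<And>A p q. p < d \<Longrightarrow> q < d \<Longrightarrow> marginal d S j (\<Psi> A) p q = depol d s A p q"
  shows "tensor_basis_sum d S e (\<lambda>a. \<Psi> (traceless_proj d (e j (a j))))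
       = of_real (s * (real d - 1))"
proof -
  have "tensor_basis_sum d S e (\<lambda>a. \<Psi> (traceless_proj d (e j (a j))))
      = (\<Sum>x<d. qform {..<d} (e j x) (marginal d S j (\<Psi> (traceless_proj d (e j x)))))"
    by (rule tensor_basis_sum_marginal[OF fin onb j])
  also have "\<dots> = (\<Sum>x<d. qform {..<d} (e j x) (depol d s (traceless_proj d (e j x))))"
    by (intro sum.cong refl qform_cong) (simp add: marg)
  also have "\<dots> = (\<Sum>x<d. of_real s * of_real (1 - 1 / real d))"
    using d onb[OF j]
    by (simp add: depol_traceless trace_traceless_proj qform_scale qform_traceless_proj_self
        onb_sqnorm)
  also have "\<dots> = of_real (s * (real d - 1))"
    using d by (simp add: field_simps)
  finally show ?thesis .
qed

(* The operator M_a of the proof idea, with the coefficient r of the identity left free. *)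
definition witness_op ::
    "nat \<Rightarrow> nat set \<Rightarrow> (nat \<Rightarrow> nat \<Rightarrow> nat \<Rightarrow> complex) \<Rightarrow> (nat \<Rightarrow> real) \<Rightarrow> real \<Rightarrow> (nat \<Rightarrow> nat) \<Rightarrow> nat op"
  where "witness_op d S e t r a =
    (\<lambda>p q. of_real r * (if p = q then 1 else 0)
      - (\<Sum>j\<in>S. of_real (t j) * traceless_proj d (e j (a j)) p q))"

lemma psd_witness_op:
  assumes d: "d > 0" and fin: "finite S" and onb: "\<And>j. j \<in> S \<Longrightarrow> onb d (e j)"
    and unb: "\<And>j k. j \<in> S \<Longrightarrow> k \<in> S \<Longrightarrow> j \<noteq> k \<Longrightarrow> unbiased d (e j) (e k)"
    and a: "a \<in> tens_idx d S"
  shows "psd {..<d} (witness_op d S e t ((1 - 1 / real d) * sqrt (\<Sum>j\<in>S. (t j)\<^sup>2)) a)"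
  unfolding witness_op_def
proof (rule psd_unbiased_combination[OF d fin])
  show "sqnorm_on {..<d} (e j (a j)) = 1" if "j \<in> S" for j
  proof -
    have "a j < d"
      using a that by (auto simp: tens_idx_def)
    then show ?thesis
      using onb_sqnorm onb that by blast
  qed
  show "cmod (inner_d d (e j (a j)) (e k (a k))) = 1 / sqrt (real d)"
    if "j \<in> S" "k \<in> S" "j \<noteq> k" for j k
    using unb[OF that] a that unfolding unbiased_def by (auto simp: tens_idx_def)
qed

lemma tensor_basis_sum_channel_identity:
  assumes fin: "finite S" and onb: "\<And>k. k \<in> S \<Longrightarrow> onb d (e k)"
    and ch: "channel {..<d} (tens_idx d S) \<Psi>"
  shows "tensor_basis_sum d S e (\<lambda>_. \<Psi> (\<lambda>p q. if p = q then 1 else 0))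
       = of_nat d"
proof -
  have "finite (tens_idx d S)"
    using fin by (simp add: tens_idx_def finite_PiE)
  moreover have "resolves_identity (tens_idx d S) (tens_idx d S) (tensor_basis S e)"
    by (rule resolves_identity_tensor_basis[OF fin]) (rule onb)
  ultimately have "tensor_basis_sum d S e (\<lambda>_. \<Psi> (\<lambda>p q. if p = q then 1 else 0))
      = tr (tens_idx d S) (\<Psi> (\<lambda>p q. if p = q then 1 else 0))"
    by (rule sum_qform_resolves_identity)
  also have "\<dots> = tr {..<d} (\<lambda>p q. if p = q then 1 else 0)"
    by (rule channel_trace[OF ch])
  finally show ?thesis
    by (simp add: tr_def)
qed

lemma tensor_basis_sum_witness_op:
  assumes d: "d > 0" and fin: "finite S" and onb: "\<And>k. k \<in> S \<Longrightarrow> onb d (e k)"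
    and ch: "channel {..<d} (tens_idx d S) \<Psi>"
    and marg: "\<And>j A p q. j \<in> S \<Longrightarrow> p < d \<Longrightarrow> q < d \<Longrightarrow>
        marginal d S j (\<Psi> A) p q = depol d (t j) A p q"
  shows "tensor_basis_sum d S e (\<lambda>a. \<Psi> (witness_op d S e t r a))
       = of_real (r * real d - (real d - 1) * (\<Sum>j\<in>S. (t j)\<^sup>2))"
proof -
  let ?Id = "\<lambda>p q. if p = q then 1 else 0 :: complex"
  let ?P = "\<lambda>j a. traceless_proj d (e j (a j))"
  let ?Q = "\<lambda>a X. qform (tens_idx d S) (tensor_basis S e a) (\<Psi> X)"
  have "?Q a (witness_op d S e t r a)
      = of_real r * ?Q a ?Id - (\<Sum>j\<in>S. of_real (t j) * ?Q a (?P j a))" for a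
  proof -
    have "?Q a (witness_op d S e t r a) = qform (tens_idx d S) (tensor_basis S e a)
        (\<lambda>f g. of_real r * \<Psi> ?Id f g - (\<Sum>j\<in>S. of_real (t j) * \<Psi> (?P j a) f g))"
      unfolding witness_op_def
      by (rule qform_cong)
        (simp only: channel_diff[OF ch] channel_scale[OF ch] channel_lincomb[OF ch])
    then show ?thesis
      by (simp only: qform_diff qform_scale qform_sum)
  qed
  then have "tensor_basis_sum d S e (\<lambda>a. \<Psi> (witness_op d S e t r a))
      = of_real r * tensor_basis_sum d S e (\<lambda>_. \<Psi> ?Id)
        - (\<Sum>j\<in>S. of_real (t j) * tensor_basis_sum d S e (\<lambda>a. \<Psi> (?P j a)))"
    by (simp add: sum_subtractf sum_distrib_left sum.swap[of _ S])
  moreover have "tensor_basis_sum d S e (\<lambda>_. \<Psi> ?Id) = of_nat d"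
    by (rule tensor_basis_sum_channel_identity[OF fin _ ch]) (rule onb)
  moreover have "tensor_basis_sum d S e (\<lambda>a. \<Psi> (?P j a)) = of_real (t j * (real d - 1))"
    if "j \<in> S" for j
    by (rule tensor_basis_sum_depol_marginal[OF d fin _ that marg[OF that]]) (rule onb)
  ultimately show ?thesis
    by (simp add: power2_eq_square sum_distrib_left mult_ac)
qed

lemma compatible_depol_sum_squares_le_1:
  assumes d: "d \<ge> 2" and fin: "finite S" and mub: "mub_family d (card S) B"
    and comp: "compatible d S (\<lambda>i. depol d (t i))"
  shows "(\<Sum>i\<in>S. (t i)\<^sup>2) \<le> 1"
proof -
  define T where "T = (\<Sum>i\<in>S. (t i)\<^sup>2)"
  define r where "r = (1 - 1 / real d) * sqrt T"
  have d0: "d > 0"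
    using d by simp
  obtain \<Psi> where ch: "channel {..<d} (tens_idx d S) \<Psi>"
    and marg: "\<And>j A p q. j \<in> S \<Longrightarrow> p < d \<Longrightarrow> q < d \<Longrightarrow> marginal d S j (\<Psi> A) p q = depol d (t j) A p q"
    using comp unfolding compatible_def by blast
  obtain e where onb: "\<And>j. j \<in> S \<Longrightarrow> onb d (e j)"
    and unb: "\<And>j k. j \<in> S \<Longrightarrow> k \<in> S \<Longrightarrow> j \<noteq> k \<Longrightarrow> unbiased d (e j) (e k)"
    using mub_family_on_set[OF fin mub] by blast
  have "psd (tens_idx d S) (\<Psi> (witness_op d S e t r a))" if "a \<in> tens_idx d S" for a
    using psd_channel[OF ch psd_witness_op[OF d0 fin onb unb that]] unfolding r_def T_def .
  then have "0 \<le> Re (tensor_basis_sum d S e (\<lambda>a. \<Psi> (witness_op d S e t r a)))"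
    unfolding psd_iff_qform Re_sum by (simp add: sum_nonneg)
  moreover have "tensor_basis_sum d S e (\<lambda>a. \<Psi> (witness_op d S e t r a))
      = of_real (r * real d - (real d - 1) * T)"
    unfolding T_def by (rule tensor_basis_sum_witness_op[OF d0 fin _ ch marg]) (rule onb)
  ultimately have "0 \<le> r * real d - (real d - 1) * T"
    by simp
  also have "\<dots> = (real d - 1) * (sqrt T - T)"
    unfolding r_def using d0 by (simp add: field_simps)
  finally have "T \<le> sqrt T"
    using d by (simp add: zero_le_mult_iff)
  show ?thesis
    unfolding T_def[symmetric]
  proof (rule ccontr)
    assume "\<not> T \<le> 1"
    then have "sqrt T * 1 < sqrt T * sqrt T"
      by (intro mult_strict_left_mono) auto
    then show False
      using \<open>T \<le> sqrt T\<close> \<open>\<not> T \<le> 1\<close> by simp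
  qed
qed

theorem corollary7p2:
  fixes d N K :: nat and t :: "nat \<Rightarrow> real"
  assumes "d \<ge> 2"
    and "\<forall>i\<in>{1..N}. 0 \<le> t i \<and> t i \<le> 1"
    and "0 < K" and "K \<le> N" and "K \<le> D d"
  shows "((\<exists>S. S \<subseteq> {1..N} \<and> card S = K \<and> (\<Sum>i\<in>S. (t i)\<^sup>2) > 1)
            \<longrightarrow> NK_incompatible d N K (\<lambda>i. depol d (t i))) \<and>
         ((\<forall>S. S \<subseteq> {1..N} \<and> card S = K \<longrightarrow> (\<Sum>i\<in>S. (t i)\<^sup>2) > 1)
            \<longrightarrow> NK_strongly_incompatible d N K (\<lambda>i. depol d (t i)))"
proof -
  obtain B where mub: "mub_family d K B"
    using ex_mub_family[OF assms(1) assms(5)] by blast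
  have "\<not> compatible d S (\<lambda>i. depol d (t i))"
    if "S \<subseteq> {1..N}" "card S = K" "(\<Sum>i\<in>S. (t i)\<^sup>2) > 1" for S
  proof
    assume "compatible d S (\<lambda>i. depol d (t i))"
    then have "(\<Sum>i\<in>S. (t i)\<^sup>2) \<le> 1"
      using compatible_depol_sum_squares_le_1[OF assms(1) finite_subset[OF that(1)]] mub that(2)
      by simp
    with that(3) show False
      by simp
  qed
  then show ?thesis
    unfolding NK_incompatible_def NK_strongly_incompatible_def by blast
qed

end
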